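(* Let $G$ be a directed acyclic graph with $n$ vertices labelled $v_1,\ldots,v_n$ in a topological order (every edge goes from some $v_a$ to some $v_b$ with $a<b$), with real edge lengths, and let $\varepsilon>0$ and $q=(1+\varepsilon)^{1/(n+1)}$. Let $\tau$ and $\tau'$ be the functions defined in the context. Then for all integers $i,j$ with $1\le i\le n$ and $i\le j$, $$\tau(v_i,q^{j-i})\;\le\;\tau'(v_i,q^j)\;\le\;\tau(v_i,q^j).$$
   Context: For a vertex $v_i$ and a real number $x\ge 0$, $\tau(v_i,x)$ is the infimum of all real $L'$ such that there are at least $x$ directed paths from $v_1$ to $v_i$ of length (sum of edge lengths) at most $L'$, with $\inf\emptyset=\infty$; the trivial path from $v_1$ to itself has length $0$, so $\tau(v_1,0)=-\infty$, $\tau(v_1,x)=0$ for $0<x\le 1$, $\tau(v_1,x)=\infty$ for $x>1$. For a vertex $v_i$ with $i>1$, let $p_1,\ldots,p_d$ be the tails of the edges entering $v_i$ and $l_1,\ldots,l_d$ the lengths of these edges. The function $\tau'$ is defined on pairs $(v_i,y)$ with $y=0$ or $y=q^j$ for an integer $j$ by: $\tau'(v_1,0)=-\infty$, $\tau'(v_1,y)=0$ for $0<y\le 1$, $\tau'(v_1,y)=\infty$ for $y>1$, and for $i>1$, $$\tau'(v_i,q^j)=\min_{\substack{\alpha_1,\ldots,\alpha_d\ge 0\\ \sum_s\alpha_s=1}}\ \max_{s}\Big(\tau'\big(p_s,q^{\lfloor j+\log_q\alpha_s\rfloor}\big)+l_s\Big),$$ where $q^{\lfloor j+\log_q\alpha_s\rfloor}$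 is interpreted as $0$ when $\alpha_s=0$, and $\tau'(v_i,0)=-\infty$ for every $i$. *)

theory Defs
  imports Complex_Main "HOL-Library.Extended_Real"
begin

text \<open>A weighted directed (multi)graph on vertices 1..n is a list of edges (tail, head, length).
  Edge e (an index < length E) goes from etail E e to ehead E e with length elen E e.\<close>

type_synonym wgraph = "(nat \<times> nat \<times> real) list"

definition etail :: "wgraph \<Rightarrow> nat \<Rightarrow> nat" where "etail E e = fst (E ! e)"
definition ehead :: "wgraph \<Rightarrow> nat \<Rightarrow> nat" where "ehead E e = fst (snd (E ! e))"
definition elen  :: "wgraph \<Rightarrow> nat \<Rightarrow> real" where "elen E e = snd (snd (E ! e))"

fun is_path :: "wgraph \<Rightarrow> nat \<Rightarrow> nat \<Rightarrow> nat list \<Rightarrow> bool" where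
  "is_path E u v [] = (u = v)"
| "is_path E u v (e # es) = (e < length E \<and> etail E e = u \<and> is_path E (ehead E e) v es)"

definition path_len :: "wgraph \<Rightarrow> nat list \<Rightarrow> real" where
  "path_len E es = (\<Sum>e\<leftarrow>es. elen E e)"

definition tau :: "wgraph \<Rightarrow> nat \<Rightarrow> real \<Rightarrow> ereal" where
  "tau E i x = Inf {ereal L | L. x \<le> real (card {es. is_path E 1 i es \<and> path_len E es \<le> L})}"

definition in_edges :: "wgraph \<Rightarrow> nat \<Rightarrow> nat set" where
  "in_edges E i = {e. e < length E \<and> ehead E e = i}"

text \<open>tau'(v_i, y) with y encoded as: None = 0, Some j = q^j.
  Auxiliary recursion on a depth counter k; tau' E q i = tau'_aux E q i i.\<close>
primrec tau'_aux :: "wgraph \<Rightarrow> real \<Rightarrow> nat \<Rightarrow> nat \<Rightarrow> int option \<Rightarrow> ereal" where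
  "tau'_aux E q 0 i y =
     (case y of None \<Rightarrow> -\<infinity> | Some j \<Rightarrow> (if q powi j \<le> 1 then 0 else \<infinity>))"
| "tau'_aux E q (Suc k) i y =
     (if i = 1 then (case y of None \<Rightarrow> -\<infinity> | Some j \<Rightarrow> (if q powi j \<le> 1 then 0 else \<infinity>))
      else (case y of None \<Rightarrow> -\<infinity>
            | Some j \<Rightarrow>
               (INF \<alpha> \<in> {\<alpha> :: nat \<Rightarrow> real. (\<forall>e \<in> in_edges E i. 0 \<le> \<alpha> e) \<and> (\<Sum>e \<in> in_edges E i. \<alpha> e) = 1}.
                  (SUP e \<in> in_edges E i.
                     tau'_aux E q k (etail E e)
                       (if \<alpha> e = 0 then None else Some \<lfloor>real_of_int j + log q (\<alpha> e)\<rfloor>)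
                     + ereal (elen E e)))))"

definition tau' :: "wgraph \<Rightarrow> real \<Rightarrow> nat \<Rightarrow> int option \<Rightarrow> ereal" where
  "tau' E q i y = tau'_aux E q i i y"

end

theory Submission
  imports Defs
begin

text \<open>Write N_v(L) for the number of paths from v_1 to v of length at most L. Splitting off the last
  edge gives N_v(L) = \<Sum>_e N_{tail e}(L - l_e) over the edges e entering v. For the upper bound, if
  N_v(L) \<ge> q^j then the weights \<alpha>_e = N_{tail e}(L - l_e) / N_v(L) are admissible in the definition
  of \<tau>', and rounding the exponent down only asks for fewer paths. For the lower bound, any admissible
  weights lose at most a factor q to the rounding at each vertex, and since every tail has a
  smaller index than its head, the recursion from v_i passes through at most i vertices.\<close>

definition topo_sorted :: "wgraph \<Rightarrow> bool" where
  "topo_sorted E \<longleftrightarrow> (\<forall>(a, b, l) \<in> set E. 1 \<le> a \<and> a < b)"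

definition short_paths :: "wgraph \<Rightarrow> nat \<Rightarrow> nat \<Rightarrow> real \<Rightarrow> nat list set" where
  "short_paths E u v L = {es. is_path E u v es \<and> path_len E es \<le> L}"

lemma tau_short_paths: "tau E v x = Inf {ereal L | L. x \<le> real (card (short_paths E 1 v L))}"
  unfolding tau_def short_paths_def by simp

lemma tau_le_if_card_ge: "x \<le> real (card (short_paths E 1 v L)) \<Longrightarrow> tau E v x \<le> ereal L"
  unfolding tau_short_paths by (rule Inf_lower) auto

lemma le_tau_if_card_ge:
  "(\<And>L. x \<le> real (card (short_paths E 1 v L)) \<Longrightarrow> y \<le> ereal L) \<Longrightarrow> y \<le> tau E v x"
  unfolding tau_short_paths by (rule Inf_greatest) auto

lemma is_path_snoc:
  "is_path E u v (es @ [e]) \<longleftrightarrow> e < length E \<and> ehead E e = v \<and> is_path E u (etail E e) es"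
  by (induction es arbitrary: u) auto

lemma path_len_snoc: "path_len E (es @ [e]) = path_len E es + elen E e"
  unfolding path_len_def by simp

lemma topo_sorted_edge:
  assumes "topo_sorted E" "e < length E"
  shows "1 \<le> etail E e" "etail E e < ehead E e"
proof -
  obtain a b l where "E ! e = (a, b, l)" by (metis prod_cases3)
  moreover have "E ! e \<in> set E" using assms(2) by simp
  ultimately show "1 \<le> etail E e" "etail E e < ehead E e"
    using assms(1) unfolding topo_sorted_def etail_def ehead_def by fastforce+
qed

lemma topo_sorted_in_edge:
  "topo_sorted E \<Longrightarrow> e \<in> in_edges E v \<Longrightarrow> 1 \<le> etail E e \<and> etail E e < v"
  unfolding in_edges_def using topo_sorted_edge by blast

lemma topo_sorted_path_length:
  "topo_sorted E \<Longrightarrow> is_path E u v es \<Longrightarrow> u + length es \<le> v"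
proof (induction es arbitrary: u)
  case (Cons e es)
  then show ?case using topo_sorted_edge(2)[of E e] by fastforce
qed simp

lemma is_path_edges: "is_path E u v es \<Longrightarrow> set es \<subseteq> {..<length E}"
  by (induction es arbitrary: u) auto

lemma finite_short_paths:
  assumes "topo_sorted E"
  shows "finite (short_paths E u v L)"
proof (rule finite_subset)
  show "short_paths E u v L \<subseteq> {es. set es \<subseteq> {..<length E} \<and> length es \<le> v}"
    using is_path_edges topo_sorted_path_length[OF assms] unfolding short_paths_def by fastforce
  show "finite {es. set es \<subseteq> {..<length E} \<and> length es \<le> v}"
    by (rule finite_lists_length_le) simp
qed

lemma card_short_paths_mono:
  "topo_sorted E \<Longrightarrow> L \<le> L' \<Longrightarrow> card (short_paths E u v L) \<le> card (short_paths E u v L')"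
  by (rule card_mono[OF finite_short_paths]) (auto simp: short_paths_def)

lemma short_paths_self:
  assumes "topo_sorted E"
  shows "short_paths E u u L = (if 0 \<le> L then {[]} else {})"
proof -
  have "is_path E u u es \<Longrightarrow> es = []" for es
    using topo_sorted_path_length[OF assms, of u u es] by simp
  then have "short_paths E u u L = {es \<in> {[]}. path_len E es \<le> L}"
    unfolding short_paths_def by auto
  also have "\<dots> = (if path_len E [] \<le> L then {[]} else {})"
    by auto
  finally show ?thesis by (simp add: path_len_def)
qed

lemma short_paths_last_edge:
  assumes "u \<noteq> v"
  shows "short_paths E u v L =
    (\<Union>e \<in> in_edges E v. (\<lambda>es. es @ [e]) ` short_paths E u (etail E e) (L - elen E e))"
proof (intro equalityI subsetI)
  fix es assume es: "es \<in> short_paths E u v L"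
  then have "es \<noteq> []" using assms unfolding short_paths_def by auto
  then obtain es' e where "es = es' @ [e]" by (metis rev_exhaust)
  with es show "es \<in> (\<Union>e \<in> in_edges E v. (\<lambda>es. es @ [e]) ` short_paths E u (etail E e) (L - elen E e))"
    unfolding short_paths_def in_edges_def by (auto simp: is_path_snoc path_len_snoc)
qed (auto simp: short_paths_def in_edges_def is_path_snoc path_len_snoc)

lemma card_short_paths_last_edge:
  assumes "topo_sorted E" "u \<noteq> v"
  shows "card (short_paths E u v L) =
    (\<Sum>e \<in> in_edges E v. card (short_paths E u (etail E e) (L - elen E e)))"
proof -
  have "finite (in_edges E v)" unfolding in_edges_def by simp
  then have "card (short_paths E u v L) =
      (\<Sum>e \<in> in_edges E v. card ((\<lambda>es. es @ [e]) ` short_paths E u (etail E e) (L - elen E e)))"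
    unfolding short_paths_last_edge[OF assms(2)]
    by (intro card_UN_disjoint) (auto simp: finite_short_paths[OF assms(1)])
  also have "\<dots> = (\<Sum>e \<in> in_edges E v. card (short_paths E u (etail E e) (L - elen E e)))"
    by (intro sum.cong card_image) (auto simp: inj_on_def)
  finally show ?thesis .
qed

definition edge_weights :: "wgraph \<Rightarrow> nat \<Rightarrow> (nat \<Rightarrow> real) set" where
  "edge_weights E v = {\<alpha>. (\<forall>e \<in> in_edges E v. 0 \<le> \<alpha> e) \<and> (\<Sum>e \<in> in_edges E v. \<alpha> e) = 1}"

definition scaled_exponent :: "real \<Rightarrow> int \<Rightarrow> real \<Rightarrow> int option" where
  "scaled_exponent q j a = (if a = 0 then None else Some \<lfloor>real_of_int j + log q a\<rfloor>)"

lemma tau'_aux_None [simp]: "tau'_aux E q k v None = -\<infinity>"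
  by (cases k) auto

lemma tau'_aux_Suc:
  "v \<noteq> 1 \<Longrightarrow> tau'_aux E q (Suc k) v (Some j) =
    (INF \<alpha> \<in> edge_weights E v. SUP e \<in> in_edges E v.
       tau'_aux E q k (etail E e) (scaled_exponent q j (\<alpha> e)) + ereal (elen E e))"
  unfolding edge_weights_def scaled_exponent_def by simp

lemma powi_floor_log_bounds:
  fixes q a :: real and j :: int
  assumes "1 < q" "0 < a"
  shows "q powi (j - 1) * a \<le> q powi \<lfloor>j + log q a\<rfloor>"
    and "q powi \<lfloor>j + log q a\<rfloor> \<le> q powi j * a"
proof -
  have powi: "q powi m = q powr of_int m" for m
    using assms by (simp add: powr_real_of_int')
  have "q powr (of_int m + log q a) = q powi m * a" for m
    using assms by (simp add: powr_add powi)
  moreover have "of_int (j - 1) + log q a \<le> of_int \<lfloor>j + log q a\<rfloor>"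
    "of_int \<lfloor>j + log q a\<rfloor> \<le> of_int j + log q a"
    by linarith+
  ultimately show "q powi (j - 1) * a \<le> q powi \<lfloor>j + log q a\<rfloor>"
    and "q powi \<lfloor>j + log q a\<rfloor> \<le> q powi j * a"
    using assms by (metis powi powr_mono less_imp_le)+
qed

lemma normalized_in_edge_weights:
  assumes "(\<Sum>e \<in> in_edges E v. c e) = C" "0 < C" "\<And>e. 0 \<le> c e"
  shows "(\<lambda>e. c e / C) \<in> edge_weights E v"
  using assms by (simp add: edge_weights_def flip: sum_divide_distrib)

lemma tau'_aux_scaled_le:
  assumes "1 < q" "0 \<le> a"
    and IH: "\<And>j'. tau'_aux E q k t (Some j') \<le> tau E t (q powi j')"
    and card: "q powi j * a \<le> real (card (short_paths E 1 t (L - l)))"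
  shows "tau'_aux E q k t (scaled_exponent q j a) + ereal l \<le> ereal L"
proof (cases "a = 0")
  case False
  define j' where "j' = \<lfloor>real_of_int j + log q a\<rfloor>"
  have "q powi j' \<le> q powi j * a"
    unfolding j'_def using assms(1,2) False by (intro powi_floor_log_bounds) auto
  also note card
  finally have "tau E t (q powi j') \<le> ereal (L - l)"
    by (rule tau_le_if_card_ge)
  with IH have "tau'_aux E q k t (Some j') \<le> ereal (L - l)"
    by (rule order_trans)
  then show ?thesis using False unfolding scaled_exponent_def j'_def[symmetric]
    by (cases "tau'_aux E q k t (Some j')") auto
qed (simp add: scaled_exponent_def)

lemma tau'_aux_le_tau:
  assumes "topo_sorted E" "1 < q"
  shows "1 \<le> v \<Longrightarrow> v \<le> k \<Longrightarrow> tau'_aux E q k v (Some j) \<le> tau E v (q powi j)"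
proof (induction k arbitrary: v j)
  case (Suc k)
  show ?case
  proof (rule le_tau_if_card_ge)
    fix L assume L: "q powi j \<le> real (card (short_paths E 1 v L))"
    have "0 < q powi j" using assms(2) by simp
    show "tau'_aux E q (Suc k) v (Some j) \<le> ereal L"
    proof (cases "v = 1")
      case True
      with L \<open>0 < q powi j\<close> show ?thesis
        by (auto simp: short_paths_self[OF assms(1)] split: if_splits)
    next
      case False
      define c where "c e = real (card (short_paths E 1 (etail E e) (L - elen E e)))" for e
      define C where "C = real (card (short_paths E 1 v L))"
      have C: "(\<Sum>e \<in> in_edges E v. c e) = C"
        unfolding C_def c_def card_short_paths_last_edge[OF assms(1) False[symmetric]] by simp
      have "0 < C" using L \<open>0 < q powi j\<close> C_def by linarith
      define \<alpha> where "\<alpha> e = c e / C" for e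
      have "\<alpha> \<in> edge_weights E v"
        unfolding \<alpha>_def using C \<open>0 < C\<close> by (intro normalized_in_edge_weights) (auto simp: c_def)
      then have "tau'_aux E q (Suc k) v (Some j) \<le> (SUP e \<in> in_edges E v.
          tau'_aux E q k (etail E e) (scaled_exponent q j (\<alpha> e)) + ereal (elen E e))"
        unfolding tau'_aux_Suc[OF False] by (rule INF_lower)
      also have "\<dots> \<le> ereal L"
      proof (rule SUP_least)
        fix e assume e: "e \<in> in_edges E v"
        have "q powi j * \<alpha> e \<le> C * \<alpha> e"
          using L \<open>0 < C\<close> C_def by (intro mult_right_mono) (auto simp: \<alpha>_def c_def)
        then have "q powi j * \<alpha> e \<le> c e"
          using \<open>0 < C\<close> unfolding \<alpha>_def by simp
        then show "tau'_aux E q k (etail E e) (scaled_exponent q j (\<alpha> e)) + ereal (elen E e)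
            \<le> ereal L"
          using topo_sorted_in_edge[OF assms(1) e] Suc.prems \<open>0 < C\<close>
          by (intro tau'_aux_scaled_le[OF assms(2)] Suc.IH) (auto simp: \<alpha>_def c_def)
      qed
      finally show ?thesis .
    qed
  qed
qed simp

lemma card_ge_if_tau_less:
  assumes "topo_sorted E" "tau E v x < ereal L"
  shows "x \<le> real (card (short_paths E 1 v L))"
proof -
  obtain L' where "L' < L" "x \<le> real (card (short_paths E 1 v L'))"
    using assms(2) unfolding tau_short_paths Inf_less_iff by auto
  then show ?thesis
    using card_short_paths_mono[OF assms(1), of L' L] by (meson less_imp_le of_nat_le_iff order_trans)
qed

lemma card_ge_if_tau'_aux_scaled_less:
  assumes "topo_sorted E" "1 < q" "0 \<le> a" "t < v"
    and IH: "\<And>j'. tau E t (q powi (j' - int t)) \<le> tau'_aux E q k t (Some j')"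
    and less: "tau'_aux E q k t (scaled_exponent q j a) + ereal l < ereal L"
  shows "q powi (j - int v) * a \<le> real (card (short_paths E 1 t (L - l)))"
proof (cases "a = 0")
  case False
  define j' where "j' = \<lfloor>real_of_int j + log q a\<rfloor>"
  have "tau E t (q powi (j' - int t)) + ereal l < ereal L"
    using less False unfolding scaled_exponent_def j'_def[symmetric]
    by (intro le_less_trans[OF add_right_mono[OF IH]]) simp
  then have "tau E t (q powi (j' - int t)) < ereal (L - l)"
    by (cases "tau E t (q powi (j' - int t))") auto
  then have card: "q powi (j' - int t) \<le> real (card (short_paths E 1 t (L - l)))"
    by (rule card_ge_if_tau_less[OF assms(1)])
  have "q powi (j - int v) \<le> q powi ((j - int t) - 1)"
    using assms(2,4) by (intro power_int_increasing) auto
  then have "q powi (j - int v) * a \<le> q powi ((j - int t) - 1) * a"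
    by (rule mult_right_mono) (use assms(3) in simp)
  also have "\<dots> \<le> q powi \<lfloor>real_of_int (j - int t) + log q a\<rfloor>"
    using assms(2,3) False by (intro powi_floor_log_bounds) auto
  also have "\<lfloor>real_of_int (j - int t) + log q a\<rfloor> = j' - int t"
    unfolding j'_def by (metis add.commute add_diff_eq floor_add_int)
  also note card
  finally show ?thesis .
qed simp

lemma tau_le_tau'_aux:
  assumes "topo_sorted E" "1 < q"
  shows "1 \<le> v \<Longrightarrow> v \<le> k \<Longrightarrow> tau E v (q powi (j - int v)) \<le> tau'_aux E q k v (Some j)"
proof (induction k arbitrary: v j)
  case (Suc k)
  show ?case
  proof (cases "v = 1")
    case True
    have "q powi (j - 1) \<le> q powi j" using assms(2) by (intro power_int_increasing) auto
    then have "q powi j \<le> 1 \<Longrightarrow> tau E v (q powi (j - int v)) \<le> ereal 0"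
      using True by (intro tau_le_if_card_ge) (simp add: short_paths_self[OF assms(1)])
    then show ?thesis using True by (simp add: zero_ereal_def)
  next
    case False
    show ?thesis unfolding tau'_aux_Suc[OF False]
    proof (rule INF_greatest)
      fix \<alpha> assume \<alpha>: "\<alpha> \<in> edge_weights E v"
      define M where "M = (SUP e \<in> in_edges E v.
        tau'_aux E q k (etail E e) (scaled_exponent q j (\<alpha> e)) + ereal (elen E e))"
      have card: "q powi (j - int v) \<le> real (card (short_paths E 1 v L))" if "M < ereal L" for L
      proof -
        have "(\<Sum>e \<in> in_edges E v. q powi (j - int v) * \<alpha> e)
            \<le> (\<Sum>e \<in> in_edges E v. real (card (short_paths E 1 (etail E e) (L - elen E e))))"
        proof (rule sum_mono)
          fix e assume e: "e \<in> in_edges E v"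
          have tail: "1 \<le> etail E e" "etail E e < v"
            using topo_sorted_in_edge[OF assms(1) e] by auto
          have IH: "tau E (etail E e) (q powi (j' - int (etail E e))) \<le> tau'_aux E q k (etail E e) (Some j')"
            for j'
            using tail Suc.prems by (intro Suc.IH) auto
          have "tau'_aux E q k (etail E e) (scaled_exponent q j (\<alpha> e)) + ereal (elen E e) \<le> M"
            unfolding M_def using e by (rule SUP_upper)
          then show "q powi (j - int v) * \<alpha> e \<le> real (card (short_paths E 1 (etail E e) (L - elen E e)))"
            using \<alpha> e \<open>M < ereal L\<close>
            by (intro card_ge_if_tau'_aux_scaled_less[OF assms _ tail(2) IH])
              (auto simp: edge_weights_def intro: le_less_trans)
        qed
        moreover have "(\<Sum>e \<in> in_edges E v. q powi (j - int v) * \<alpha> e) = q powi (j - int v)"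
          using \<alpha> by (simp add: edge_weights_def flip: sum_distrib_left)
        ultimately show ?thesis
          unfolding card_short_paths_last_edge[OF assms(1) False[symmetric]] by simp
      qed
      show "tau E v (q powi (j - int v)) \<le> M"
      proof (rule dense_ge)
        fix y assume "M < y"
        then show "tau E v (q powi (j - int v)) \<le> y"
        proof (cases y)
          case (real L)
          show ?thesis unfolding real by (intro tau_le_if_card_ge card) (use \<open>M < y\<close> real in simp)
        qed simp_all
      qed
    qed
  qed
qed simp

theorem lemma1:
  fixes E :: wgraph and n :: nat and \<epsilon> q :: real
  assumes topo: "\<forall>(a, b, l) \<in> set E. 1 \<le> a \<and> a < b \<and> b \<le> n"
    and eps: "\<epsilon> > 0"
    and q_def: "q = (1 + \<epsilon>) powr (1 / (real n + 1))"
  shows "\<forall>(i::nat) (j::int). 1 \<le> i \<and> i \<le> n \<and> int i \<le> j \<longrightarrow>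
           tau E i (q powi (j - int i)) \<le> tau' E q i (Some j) \<and>
           tau' E q i (Some j) \<le> tau E i (q powi j)"
proof -
  have "topo_sorted E" using topo unfolding topo_sorted_def by auto
  moreover have "1 < q" unfolding q_def using eps by (intro gr_one_powr) auto
  ultimately show ?thesis
    unfolding tau'_def by (auto intro: tau_le_tau'_aux tau'_aux_le_tau)
qed

end
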